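(* Let $(R,\mathcal B)$ be a bornological $V$-algebra. The following are equivalent: (1) $\varrho(M)\le1$ for all $M\in\mathcal B$ that are $V$-submodules; (2) $\sum_{j\ge0}\pi^jM^{cj+d}$ is bounded for all bounded $M$ and all $c,d\in\mathbb N$; (3) $\sum_{j\ge0}\pi^jM^{j+1}$ is bounded for all bounded $M$; (4) every bounded subset of $R$ is contained in a bounded $V$-submodule $M$ with $\pi M^2\subseteq M$.
   Context: $V$ complete DVR with uniformizer $\pi$, $|\pi|=\epsilon\in(0,1)$. A (convex) bornology: bounded sets contain finite sets, closed under subsets, finite unions and generated $V$-submodules; a bornological algebra has bounded multiplication. Sums $\sum_j X_j$ denote the set of finite sums of elements of $\bigcup_jX_j$. For $r\ge1$ and a $V$-submodule $M$, $r^{-n}\star M^n:=\pi^{\lceil\log_\epsilon(r^{-n})\rceil}M^n$, and "$\varrho(M)\le1$" means that $\sum_{n\ge0}r^{-n}\star M^n$ is bounded for every $r>1$. *)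

theory Defs
  imports Complex_Main
begin

definition complete_dvr_unif :: "'v::idom \<Rightarrow> bool" where
  "complete_dvr_unif \<pi> \<longleftrightarrow>
     \<pi> \<noteq> 0 \<and> \<not> \<pi> dvd 1 \<and>
     (\<forall>x. x \<noteq> 0 \<longrightarrow> (\<exists>u n. u dvd 1 \<and> x = u * \<pi> ^ n)) \<and>
     (\<forall>f :: nat \<Rightarrow> 'v. (\<forall>n. \<pi> ^ n dvd (f (Suc n) - f n)) \<longrightarrow>
        (\<exists>L. \<forall>n. \<pi> ^ n dvd (L - f n)))"

definition V_algebra :: "('v::comm_ring_1 \<Rightarrow> 'r::ring_1 \<Rightarrow> 'r) \<Rightarrow> bool" where
  "V_algebra sm \<longleftrightarrow>
     (\<forall>a x y. sm a (x + y) = sm a x + sm a y) \<and>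
     (\<forall>a b x. sm (a + b) x = sm a x + sm b x) \<and>
     (\<forall>a b x. sm (a * b) x = sm a (sm b x)) \<and>
     (\<forall>x. sm 1 x = x) \<and>
     (\<forall>a x y. sm a (x * y) = sm a x * y) \<and>
     (\<forall>a x y. sm a (x * y) = x * sm a y)"

definition V_submodule :: "('v \<Rightarrow> 'r \<Rightarrow> 'r) \<Rightarrow> 'r::ring_1 set \<Rightarrow> bool" where
  "V_submodule sm M \<longleftrightarrow> 0 \<in> M \<and> (\<forall>x\<in>M. \<forall>y\<in>M. x + y \<in> M) \<and> (\<forall>a. \<forall>x\<in>M. sm a x \<in> M)"

definition V_span :: "('v \<Rightarrow> 'r \<Rightarrow> 'r) \<Rightarrow> 'r::ring_1 set \<Rightarrow> 'r set" where
  "V_span sm S = \<Inter>{M. V_submodule sm M \<and> S \<subseteq> M}"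

definition bornology :: "('v \<Rightarrow> 'r \<Rightarrow> 'r) \<Rightarrow> 'r::ring_1 set set \<Rightarrow> bool" where
  "bornology sm B \<longleftrightarrow>
     (\<forall>S. finite S \<longrightarrow> S \<in> B) \<and>
     (\<forall>S\<in>B. \<forall>T. T \<subseteq> S \<longrightarrow> T \<in> B) \<and>
     (\<forall>S\<in>B. \<forall>T\<in>B. S \<union> T \<in> B) \<and>
     (\<forall>S\<in>B. V_span sm S \<in> B)"

definition bornological_algebra :: "('v::comm_ring_1 \<Rightarrow> 'r \<Rightarrow> 'r) \<Rightarrow> 'r::ring_1 set set \<Rightarrow> bool" where
  "bornological_algebra sm B \<longleftrightarrow> V_algebra sm \<and> bornology sm B \<and>
     (\<forall>S\<in>B. \<forall>T\<in>B. {s * t | s t. s \<in> S \<and> t \<in> T} \<in> B)"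

definition setpow :: "'r::ring_1 set \<Rightarrow> nat \<Rightarrow> 'r set" where
  "setpow M n = {prod_list xs | xs. length xs = n \<and> set xs \<subseteq> M}"

definition sscale :: "('v \<Rightarrow> 'r \<Rightarrow> 'r) \<Rightarrow> 'v \<Rightarrow> 'r set \<Rightarrow> 'r set" where
  "sscale sm a S = sm a ` S"

definition fsums :: "(nat \<Rightarrow> 'r::ring_1 set) \<Rightarrow> 'r set" where
  "fsums X = {sum_list xs | xs. set xs \<subseteq> (\<Union>j. X j)}"

text \<open>r^{-n} \<star> M^n = \<pi>^(ceil(log_eps (r^{-n}))) M^n.\<close>
definition star_pow :: "('v::comm_ring_1 \<Rightarrow> 'r \<Rightarrow> 'r) \<Rightarrow> 'v \<Rightarrow> real \<Rightarrow> real \<Rightarrow> nat \<Rightarrow> 'r::ring_1 set \<Rightarrow> 'r set" where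
  "star_pow sm \<pi> eps r n M = sscale sm (\<pi> ^ nat \<lceil>log eps ((1 / r) ^ n)\<rceil>) (setpow M n)"

definition rho_le_1 :: "('v::comm_ring_1 \<Rightarrow> 'r \<Rightarrow> 'r) \<Rightarrow> 'r::ring_1 set set \<Rightarrow> 'v \<Rightarrow> real \<Rightarrow> 'r set \<Rightarrow> bool" where
  "rho_le_1 sm B \<pi> eps M \<longleftrightarrow> (\<forall>r::real. r > 1 \<longrightarrow> fsums (\<lambda>n. star_pow sm \<pi> eps r n M) \<in> B)"

end

theory Submission
  imports Defs
begin

text \<open>If \<open>K\<close> is a submodule with \<open>\<pi>K\<^sup>2 \<subseteq> K\<close>, then \<open>\<pi>\<^sup>j\<^sup>+\<^sup>1xy = \<pi>(x \<cdot> \<pi>\<^sup>jy)\<close> gives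
  \<open>\<pi>\<^sup>jK\<^sup>j\<^sup>+\<^sup>1 \<subseteq> K\<close>. Taking such a bounded \<open>K\<close> that contains \<open>1\<close> and the \<open>C\<close>-fold products of
  \<open>M \<union> {1}\<close>, we get \<open>\<pi>\<^sup>eM\<^sup>n \<subseteq> K\<close> whenever \<open>n \<le> C(j+1)\<close> and \<open>e \<ge> j\<close>. This gives (2), and
  also (1): \<open>r\<^sup>-\<^sup>n \<star> M\<^sup>n\<close> is scaled by \<open>\<pi>\<^sup>e\<close> with \<open>e \<ge> n log\<^sub>\<epsilon>(1/r) \<ge> n div C\<close> once
  \<open>C log\<^sub>\<epsilon>(1/r) \<ge> 1\<close>. Conversely, (1) for \<open>r = \<epsilon>\<^sup>-\<^sup>1\<^sup>/\<^sup>2\<close> gives (3), as \<open>\<lceil>(j+1)/2\<rceil> \<le> j\<close> for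
  \<open>j \<ge> 1\<close>; and under (3) the bounded set \<open>\<Sum>\<^sub>j \<pi>\<^sup>jN\<^sup>j\<^sup>+\<^sup>1\<close>, with \<open>N\<close> the submodule generated
  by \<open>S\<close>, is a submodule containing \<open>S\<close> and closed under \<open>(x, y) \<mapsto> \<pi>xy\<close>, which is (4).\<close>

lemma setpow_0 [simp]: "setpow M 0 = {1}"
  by (auto simp: setpow_def)

lemma setpow_Suc: "setpow M (Suc n) = {s * t | s t. s \<in> M \<and> t \<in> setpow M n}"
proof (intro equalityI subsetI)
  fix x assume "x \<in> setpow M (Suc n)"
  then obtain y ys where "x = prod_list (y # ys)" "length ys = n" "set (y # ys) \<subseteq> M"
    unfolding setpow_def by (auto simp: length_Suc_conv)
  then show "x \<in> {s * t | s t. s \<in> M \<and> t \<in> setpow M n}"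
    by (auto simp: setpow_def)
next
  fix x assume "x \<in> {s * t | s t. s \<in> M \<and> t \<in> setpow M n}"
  then obtain s ys where "x = prod_list (s # ys)" "length ys = n" "set (s # ys) \<subseteq> M"
    by (auto simp: setpow_def)
  then show "x \<in> setpow M (Suc n)"
    unfolding setpow_def by (intro CollectI exI[of _ "s # ys"]) auto
qed

lemma setpow_Suc_0 [simp]: "setpow M (Suc 0) = M"
  using setpow_Suc[of M 0] by auto

lemma setpow_2: "setpow M 2 = {s * t | s t. s \<in> M \<and> t \<in> M}"
  using setpow_Suc[of M "Suc 0"] by (simp add: numeral_2_eq_2)

lemma setpow_add: "setpow M (m + n) = {s * t | s t. s \<in> setpow M m \<and> t \<in> setpow M n}"
proof (intro equalityI subsetI)
  fix x assume "x \<in> setpow M (m + n)"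
  then obtain xs where xs: "x = prod_list xs" "length xs = m + n" "set xs \<subseteq> M"
    by (auto simp: setpow_def)
  have "x = prod_list (take m xs) * prod_list (drop m xs)"
    by (metis xs(1) append_take_drop_id prod_list.append)
  moreover have "prod_list (take m xs) \<in> setpow M m"
    unfolding setpow_def using xs by (intro CollectI exI[of _ "take m xs"]) (auto dest: in_set_takeD)
  moreover have "prod_list (drop m xs) \<in> setpow M n"
    unfolding setpow_def using xs by (intro CollectI exI[of _ "drop m xs"]) (auto dest: in_set_dropD)
  ultimately show "x \<in> {s * t | s t. s \<in> setpow M m \<and> t \<in> setpow M n}"
    by blast
next
  fix x assume "x \<in> {s * t | s t. s \<in> setpow M m \<and> t \<in> setpow M n}"
  then obtain xs ys where "x = prod_list (xs @ ys)" "length (xs @ ys) = m + n" "set (xs @ ys) \<subseteq> M"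
    by (auto simp: setpow_def)
  then show "x \<in> setpow M (m + n)"
    unfolding setpow_def by (intro CollectI exI[of _ "xs @ ys"]) auto
qed

lemma setpow_mono: "M \<subseteq> N \<Longrightarrow> setpow M n \<subseteq> setpow N n"
  unfolding setpow_def by auto

lemma setpow_mono_exp:
  assumes "1 \<in> M" "m \<le> n"
  shows "setpow M m \<subseteq> setpow M n"
proof
  fix x assume x: "x \<in> setpow M m"
  have "1 \<in> setpow M (n - m)"
    unfolding setpow_def using \<open>1 \<in> M\<close> by (intro CollectI exI[of _ "replicate (n - m) 1"]) auto
  with x have "x * 1 \<in> setpow M (m + (n - m))"
    unfolding setpow_add by blast
  with \<open>m \<le> n\<close> show "x \<in> setpow M n"
    by simp
qed

lemma setpow_mult: "setpow M (m * n) \<subseteq> setpow (setpow M m) n"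
proof (induction n)
  case (Suc n)
  have "setpow M (m * Suc n) = {s * t | s t. s \<in> setpow M m \<and> t \<in> setpow M (m * n)}"
    by (simp add: setpow_add)
  with Suc show ?case
    by (auto simp: setpow_Suc)
qed simp

lemma div_le_nat_ceiling_mult:
  fixes \<alpha> :: real
  assumes "1 \<le> real C * \<alpha>"
  shows "n div C \<le> nat \<lceil>real n * \<alpha>\<rceil>"
proof -
  have "\<alpha> > 0"
    using assms by (smt (verit) mult_nonneg_nonpos of_nat_0_le_iff)
  have "real (n div C) \<le> real (n div C) * (real C * \<alpha>)"
    using assms by (simp add: mult_le_cancel_left1)
  also have "\<dots> = real (C * (n div C)) * \<alpha>"
    by simp
  also have "\<dots> \<le> real n * \<alpha>"
    using \<open>\<alpha> > 0\<close> times_div_less_eq_dividend[of C n]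
    by (intro mult_right_mono) (simp_all only: of_nat_le_iff less_imp_le)
  finally show ?thesis
    by linarith
qed

locale V_alg =
  fixes sm :: "'v::comm_ring_1 \<Rightarrow> 'r::ring_1 \<Rightarrow> 'r"
  assumes V_algebra: "V_algebra sm"
begin

lemma
  shows sm_add: "sm a (x + y) = sm a x + sm a y"
    and sm_mult: "sm (a * b) x = sm a (sm b x)"
    and sm_one [simp]: "sm 1 x = x"
    and sm_mult_left: "sm a (x * y) = sm a x * y"
    and sm_mult_right: "sm a (x * y) = x * sm a y"
  using V_algebra unfolding V_algebra_def by blast+

lemma sm_zero [simp]: "sm a 0 = 0"
  using sm_add[of a 0 0] by simp

lemma sm_sum_list: "sm a (sum_list xs) = sum_list (map (sm a) xs)"
  by (induction xs) (simp_all add: sm_add)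

lemma sm_power_add: "sm (c ^ (i + k)) x = sm (c ^ i) (sm (c ^ k) x)"
  by (simp add: power_add sm_mult)

lemma sm_commute: "sm a (sm b x) = sm b (sm a x)"
  by (metis sm_mult mult.commute)

lemma sm_mult_sm: "sm a x * sm b y = sm (a * b) (x * y)"
  by (metis sm_mult sm_mult_left sm_mult_right)

lemma submodule_sm_power_mono:
  assumes "V_submodule sm K" "j \<le> e" "sm (c ^ j) x \<in> K"
  shows "sm (c ^ e) x \<in> K"
  using assms sm_power_add[of c "e - j" j x] unfolding V_submodule_def by simp

lemma V_span_superset: "S \<subseteq> V_span sm S"
  unfolding V_span_def by auto

lemma V_submodule_V_span: "V_submodule sm (V_span sm S)"
  unfolding V_span_def V_submodule_def by auto

lemma sum_list_mem_submodule:
  "V_submodule sm N \<Longrightarrow> set xs \<subseteq> N \<Longrightarrow> sum_list xs \<in> N"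
  by (induction xs) (auto simp: V_submodule_def)

lemma fsums_subset_submodule:
  assumes "V_submodule sm N" "\<And>j. X j \<subseteq> N"
  shows "fsums X \<subseteq> N"
  using assms sum_list_mem_submodule by (fastforce simp: fsums_def)

lemma subset_fsums: "X j \<subseteq> fsums X"
  unfolding fsums_def by (force intro: exI[of _ "[_]"])

lemma sum_list_mem_fsums: "set xs \<subseteq> fsums X \<Longrightarrow> sum_list xs \<in> fsums X"
proof (induction xs)
  case Nil
  show ?case
    unfolding fsums_def by (force intro: exI[of _ "[]"])
next
  case (Cons x xs)
  then obtain ys zs where "x = sum_list ys" "sum_list xs = sum_list zs"
    "set (ys @ zs) \<subseteq> (\<Union>j. X j)"
    by (auto simp: fsums_def)
  then show ?case
    unfolding fsums_def by (intro CollectI exI[of _ "ys @ zs"]) auto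
qed

lemma fsums_submodule:
  assumes "\<And>a u. u \<in> (\<Union>j. X j) \<Longrightarrow> sm a u \<in> (\<Union>j. X j)"
  shows "V_submodule sm (fsums X)"
  unfolding V_submodule_def
proof (intro conjI ballI allI)
  show "0 \<in> fsums X"
    using sum_list_mem_fsums[of "[]"] by simp
  show "x + y \<in> fsums X" if "x \<in> fsums X" "y \<in> fsums X" for x y
    using sum_list_mem_fsums[of "[x, y]"] that by simp
  show "sm a x \<in> fsums X" if "x \<in> fsums X" for a x
  proof -
    from that obtain xs where "x = sum_list xs" "set xs \<subseteq> (\<Union>j. X j)"
      by (auto simp: fsums_def)
    moreover from \<open>set xs \<subseteq> (\<Union>j. X j)\<close> have "set (map (sm a) xs) \<subseteq> (\<Union>j. X j)"
      using assms by (fastforce simp: subset_eq)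
    ultimately show ?thesis
      unfolding fsums_def by (intro CollectI exI[of _ "map (sm a) xs"]) (simp add: sm_sum_list)
  qed
qed

lemma fsums_sm_mult_closed:
  assumes "\<And>u v. u \<in> (\<Union>j. X j) \<Longrightarrow> v \<in> (\<Union>j. X j) \<Longrightarrow> sm a (u * v) \<in> (\<Union>j. X j)"
    and "x \<in> fsums X" "y \<in> fsums X"
  shows "sm a (x * y) \<in> fsums X"
proof -
  obtain xs ys where xy: "x = sum_list xs" "y = sum_list ys"
    and sets: "set xs \<subseteq> (\<Union>j. X j)" "set ys \<subseteq> (\<Union>j. X j)"
    using assms(2,3) by (auto simp: fsums_def)
  have "x * y = (\<Sum>u\<leftarrow>xs. \<Sum>v\<leftarrow>ys. u * v)"
    unfolding xy by (induction xs) (simp_all add: distrib_right sum_list_const_mult)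
  then have "sm a (x * y) = (\<Sum>u\<leftarrow>xs. \<Sum>v\<leftarrow>ys. sm a (u * v))"
    by (simp add: sm_sum_list o_def)
  also have "\<dots> \<in> fsums X"
  proof -
    have "sm a (u * v) \<in> fsums X" if "u \<in> set xs" "v \<in> set ys" for u v
    proof -
      have "sm a (u * v) \<in> (\<Union>j. X j)"
        using assms(1) sets that by (meson subsetD)
      then show ?thesis
        using subset_fsums by fast
    qed
    then show ?thesis
      by (auto intro!: sum_list_mem_fsums)
  qed
  finally show ?thesis .
qed

end

locale bornological_V_alg =
  fixes sm :: "'v::comm_ring_1 \<Rightarrow> 'r::ring_1 \<Rightarrow> 'r" and B :: "'r set set"
  assumes bornological_algebra: "bornological_algebra sm B"
begin

sublocale V_alg sm
  using bornological_algebra by unfold_locales (simp add: bornological_algebra_def)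

lemma
  shows bounded_finite: "finite S \<Longrightarrow> S \<in> B"
    and bounded_subset: "S \<in> B \<Longrightarrow> T \<subseteq> S \<Longrightarrow> T \<in> B"
    and bounded_Un: "S \<in> B \<Longrightarrow> T \<in> B \<Longrightarrow> S \<union> T \<in> B"
    and bounded_V_span: "S \<in> B \<Longrightarrow> V_span sm S \<in> B"
    and bounded_mult: "S \<in> B \<Longrightarrow> T \<in> B \<Longrightarrow> {s * t | s t. s \<in> S \<and> t \<in> T} \<in> B"
  using bornological_algebra unfolding bornological_algebra_def bornology_def by auto

lemma bounded_insert: "S \<in> B \<Longrightarrow> insert x S \<in> B"
  using bounded_Un[of "{x}" S] bounded_finite by simp

lemma bounded_setpow: "M \<in> B \<Longrightarrow> setpow M n \<in> B"
  by (induction n) (simp_all add: bounded_finite setpow_Suc bounded_mult)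

lemma fsums_bounded:
  assumes "K \<in> B" "V_submodule sm K" "\<And>j. X j \<subseteq> K"
  shows "fsums X \<in> B"
  using assms fsums_subset_submodule bounded_subset by metis

lemma sm_power_setpow_Suc:
  assumes K: "V_submodule sm K" "sscale sm c (setpow K 2) \<subseteq> K"
  shows "x \<in> setpow K (Suc j) \<Longrightarrow> sm (c ^ j) x \<in> K"
proof (induction j arbitrary: x)
  case 0
  then show ?case
    by (auto simp: setpow_Suc)
next
  case (Suc j)
  then obtain y z where yz: "x = y * z" "y \<in> K" "z \<in> setpow K (Suc j)"
    by (auto simp: setpow_Suc[of K "Suc j"])
  have "sm (c ^ Suc j) x = sm c (y * sm (c ^ j) z)"
    using sm_power_add[of c 1 j] by (simp add: yz(1) sm_mult_right)
  moreover have "y * sm (c ^ j) z \<in> setpow K 2"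
    using yz Suc.IH by (auto simp: setpow_2)
  ultimately show ?case
    using K(2) unfolding sscale_def by auto
qed

lemma bounded_submodule_absorbing_setpow:
  assumes hull: "\<And>S. S \<in> B \<Longrightarrow>
      \<exists>K. V_submodule sm K \<and> K \<in> B \<and> S \<subseteq> K \<and> sscale sm c (setpow K 2) \<subseteq> K"
    and "M \<in> B"
  obtains K where "K \<in> B" "V_submodule sm K"
    "\<And>j e n x. j \<le> e \<Longrightarrow> n \<le> C * Suc j \<Longrightarrow> x \<in> setpow M n \<Longrightarrow> sm (c ^ e) x \<in> K"
proof -
  let ?M1 = "insert 1 M"
  have "insert 1 (setpow ?M1 C) \<in> B"
    using \<open>M \<in> B\<close> by (intro bounded_insert bounded_setpow)
  with hull obtain K where K: "V_submodule sm K" "K \<in> B" "insert 1 (setpow ?M1 C) \<subseteq> K"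
    "sscale sm c (setpow K 2) \<subseteq> K"
    by blast
  have absorb: "sm (c ^ e) x \<in> K" if "j \<le> e" "n \<le> C * Suc j" "x \<in> setpow M n" for j e n x
  proof -
    have "x \<in> setpow ?M1 n"
      using setpow_mono[of M ?M1] that(3) by blast
    then have "x \<in> setpow ?M1 (C * Suc j)"
      using setpow_mono_exp[of ?M1, OF _ that(2)] by blast
    then have "x \<in> setpow K (Suc j)"
      using setpow_mult setpow_mono[of "setpow ?M1 C" K] K(3) by blast
    then have "sm (c ^ j) x \<in> K"
      by (rule sm_power_setpow_Suc[OF K(1,4)])
    with K(1) that(1) show ?thesis
      by (rule submodule_sm_power_mono)
  qed
  from that[OF K(2,1) absorb] show ?thesis .
qed

lemma fsums_setpow_affine_bounded:
  assumes hull: "\<And>S. S \<in> B \<Longrightarrow>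
      \<exists>K. V_submodule sm K \<and> K \<in> B \<and> S \<subseteq> K \<and> sscale sm c (setpow K 2) \<subseteq> K"
    and "M \<in> B"
  shows "fsums (\<lambda>j. sscale sm (c ^ j) (setpow M (a * j + d))) \<in> B"
proof -
  obtain K where K: "K \<in> B" "V_submodule sm K"
    and absorb: "\<And>j e n x. j \<le> e \<Longrightarrow> n \<le> max a d * Suc j \<Longrightarrow> x \<in> setpow M n \<Longrightarrow> sm (c ^ e) x \<in> K"
    using bounded_submodule_absorbing_setpow[OF hull \<open>M \<in> B\<close>] by blast
  have "a * j + d \<le> max a d * Suc j" for j
  proof -
    have "a * j \<le> max a d * j"
      by (rule mult_le_mono1) simp
    then show ?thesis
      unfolding mult_Suc_right using max.cobounded2[of d a] by linarith
  qed
  then have "sscale sm (c ^ j) (setpow M (a * j + d)) \<subseteq> K" for j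
    unfolding sscale_def using absorb by blast
  with K show ?thesis
    by (rule fsums_bounded)
qed

lemma rho_le_1_if_absorbing_hulls:
  assumes hull: "\<And>S. S \<in> B \<Longrightarrow>
      \<exists>K. V_submodule sm K \<and> K \<in> B \<and> S \<subseteq> K \<and> sscale sm \<pi> (setpow K 2) \<subseteq> K"
    and "M \<in> B" "0 < eps" "eps < 1"
  shows "rho_le_1 sm B \<pi> eps M"
  unfolding rho_le_1_def
proof (intro allI impI)
  fix r :: real
  assume "r > 1"
  define \<alpha> where "\<alpha> = log eps (1 / r)"
  have "\<alpha> > 0"
    unfolding \<alpha>_def using \<open>r > 1\<close> \<open>0 < eps\<close> \<open>eps < 1\<close> by (simp add: log_def divide_neg_neg)
  define C where "C = nat \<lceil>1 / \<alpha>\<rceil>"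
  have "1 / \<alpha> \<le> real C"
    unfolding C_def by linarith
  then have "1 \<le> real C * \<alpha>"
    using \<open>\<alpha> > 0\<close> by (simp add: field_simps)
  then have "C > 0"
    by (cases C) auto
  obtain K where K: "K \<in> B" "V_submodule sm K"
    and absorb: "\<And>j e n x. j \<le> e \<Longrightarrow> n \<le> C * Suc j \<Longrightarrow> x \<in> setpow M n \<Longrightarrow> sm (\<pi> ^ e) x \<in> K"
    using bounded_submodule_absorbing_setpow[OF hull \<open>M \<in> B\<close>] by blast
  have "star_pow sm \<pi> eps r n M \<subseteq> K" for n
  proof -
    have "nat \<lceil>log eps ((1 / r) ^ n)\<rceil> = nat \<lceil>real n * \<alpha>\<rceil>"
      unfolding \<alpha>_def using \<open>r > 1\<close> by (simp add: log_nat_power)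
    moreover have "n div C \<le> nat \<lceil>real n * \<alpha>\<rceil>"
      using \<open>1 \<le> real C * \<alpha>\<close> by (rule div_le_nat_ceiling_mult)
    moreover have "n \<le> C * Suc (n div C)"
      unfolding mult_Suc_right using mod_less_divisor[OF \<open>C > 0\<close>, of n] mult_div_mod_eq[of C n]
      by linarith
    ultimately show ?thesis
      unfolding star_pow_def sscale_def using absorb by auto
  qed
  with K show "fsums (\<lambda>n. star_pow sm \<pi> eps r n M) \<in> B"
    by (rule fsums_bounded)
qed

lemma fsums_setpow_Suc_bounded_if_rho_le_1:
  assumes rho: "\<And>N. N \<in> B \<Longrightarrow> V_submodule sm N \<Longrightarrow> rho_le_1 sm B \<pi> eps N"
    and "M \<in> B" "0 < eps" "eps < 1"
  shows "fsums (\<lambda>j. sscale sm (\<pi> ^ j) (setpow M (j + 1))) \<in> B"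
proof -
  define N where "N = V_span sm M"
  have "N \<in> B" "V_submodule sm N" "M \<subseteq> N"
    unfolding N_def using \<open>M \<in> B\<close> by (simp_all add: bounded_V_span V_submodule_V_span V_span_superset)
  define r where "r = 1 / sqrt eps"
  have "r > 1"
    unfolding r_def using \<open>0 < eps\<close> \<open>eps < 1\<close> by (simp add: real_sqrt_lt_1_iff)
  define F where "F = fsums (\<lambda>n. star_pow sm \<pi> eps r n N)"
  have "F \<in> B"
    using rho[OF \<open>N \<in> B\<close> \<open>V_submodule sm N\<close>] \<open>r > 1\<close> unfolding rho_le_1_def F_def by blast
  define Q where "Q = V_span sm (M \<union> F)"
  have Q: "Q \<in> B" "V_submodule sm Q" "M \<union> F \<subseteq> Q"
    unfolding Q_def using \<open>M \<in> B\<close> \<open>F \<in> B\<close>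
    by (simp_all add: bounded_V_span bounded_Un V_submodule_V_span V_span_superset)
  have exponent: "log eps ((1 / r) ^ n) = real n / 2" for n
    unfolding r_def using \<open>0 < eps\<close> \<open>eps < 1\<close>
    by (simp add: log_nat_power powr_half_sqrt[symmetric] log_powr_cancel)
  have "sm (\<pi> ^ j) x \<in> Q" if x: "x \<in> setpow M (j + 1)" for j x
  proof (cases j)
    case 0
    then show ?thesis
      using x Q(3) by auto
  next
    case (Suc i)
    define e where "e = nat \<lceil>log eps ((1 / r) ^ (j + 1))\<rceil>"
    have "real (j + 1) / 2 \<le> real j"
      using Suc by simp
    then have "e \<le> j"
      unfolding e_def exponent by linarith
    have "x \<in> setpow N (j + 1)"
      using x setpow_mono[OF \<open>M \<subseteq> N\<close>] by blast
    then have "sm (\<pi> ^ e) x \<in> star_pow sm \<pi> eps r (j + 1) N"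
      unfolding star_pow_def sscale_def e_def by blast
    moreover have "star_pow sm \<pi> eps r (j + 1) N \<subseteq> F"
      unfolding F_def by (rule subset_fsums)
    ultimately have "sm (\<pi> ^ e) x \<in> Q"
      using Q(3) by blast
    with Q(2) \<open>e \<le> j\<close> show ?thesis
      by (rule submodule_sm_power_mono)
  qed
  then have "sscale sm (\<pi> ^ j) (setpow M (j + 1)) \<subseteq> Q" for j
    unfolding sscale_def by blast
  with Q(1,2) show ?thesis
    by (rule fsums_bounded)
qed

lemma absorbing_hull_if_fsums_setpow_Suc_bounded:
  assumes sums: "\<And>N. N \<in> B \<Longrightarrow> fsums (\<lambda>j. sscale sm (c ^ j) (setpow N (j + 1))) \<in> B"
    and "S \<in> B"
  shows "\<exists>K. V_submodule sm K \<and> K \<in> B \<and> S \<subseteq> K \<and> sscale sm c (setpow K 2) \<subseteq> K"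
proof -
  define N where "N = V_span sm S"
  have "N \<in> B"
    unfolding N_def using \<open>S \<in> B\<close> by (rule bounded_V_span)
  define X where "X j = sscale sm (c ^ j) (setpow N (j + 1))" for j
  define K where "K = fsums X"
  have "K \<in> B"
    unfolding K_def X_def using sums[OF \<open>N \<in> B\<close>] .
  have X_sm: "sm a u \<in> (\<Union>j. X j)" if u_mem: "u \<in> (\<Union>j. X j)" for a u
  proof -
    obtain j p where "u = sm (c ^ j) p" "p \<in> setpow N (j + 1)"
      using u_mem unfolding X_def sscale_def by auto
    then obtain y z where u: "u = sm (c ^ j) (y * z)" "y \<in> N" "z \<in> setpow N j"
      unfolding Suc_eq_plus1[symmetric] setpow_Suc by blast
    have "sm a y \<in> N"
      using V_submodule_V_span u(2) unfolding N_def V_submodule_def by blast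
    with u(3) have "sm a y * z \<in> setpow N (j + 1)"
      by (auto simp: setpow_Suc)
    moreover have "sm a u = sm (c ^ j) (sm a y * z)"
      by (simp add: u(1) sm_commute sm_mult_left)
    ultimately show ?thesis
      unfolding X_def sscale_def by blast
  qed
  have X_mult: "sm c (u * v) \<in> (\<Union>j. X j)" if uv_mem: "u \<in> (\<Union>j. X j)" "v \<in> (\<Union>j. X j)" for u v
  proof -
    obtain i k p q where pq: "u = sm (c ^ i) p" "p \<in> setpow N (i + 1)"
      "v = sm (c ^ k) q" "q \<in> setpow N (k + 1)"
      using uv_mem unfolding X_def sscale_def by auto
    have "p * q \<in> setpow N ((i + k + 1) + 1)"
      using pq(2,4) setpow_add[of N "i + 1" "k + 1"] by auto
    moreover have "sm c (u * v) = sm (c ^ (i + k + 1)) (p * q)"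
      by (simp add: pq(1,3) sm_mult_sm sm_mult[symmetric] power_add mult.commute)
    ultimately show ?thesis
      unfolding X_def sscale_def by blast
  qed
  have "V_submodule sm K"
    unfolding K_def using X_sm by (rule fsums_submodule)
  moreover have "S \<subseteq> K"
  proof -
    have "S \<subseteq> X 0"
      unfolding X_def sscale_def N_def using V_span_superset by auto
    then show ?thesis
      unfolding K_def using subset_fsums by blast
  qed
  moreover have "sscale sm c (setpow K 2) \<subseteq> K"
    unfolding sscale_def setpow_2 K_def using fsums_sm_mult_closed[OF X_mult] by blast
  ultimately show ?thesis
    using \<open>K \<in> B\<close> by blast
qed

end

theorem mainTheorem12:
  fixes \<pi> :: "'v::idom" and eps :: real
    and sm :: "'v \<Rightarrow> 'r::ring_1 \<Rightarrow> 'r" and B :: "'r set set"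
  assumes "complete_dvr_unif \<pi>"
    and "0 < eps" and "eps < 1"
    and "bornological_algebra sm B"
  defines "P1 \<equiv> (\<forall>M\<in>B. V_submodule sm M \<longrightarrow> rho_le_1 sm B \<pi> eps M)"
    and "P2 \<equiv> (\<forall>M\<in>B. \<forall>c d :: nat. fsums (\<lambda>j. sscale sm (\<pi> ^ j) (setpow M (c * j + d))) \<in> B)"
    and "P3 \<equiv> (\<forall>M\<in>B. fsums (\<lambda>j. sscale sm (\<pi> ^ j) (setpow M (j + 1))) \<in> B)"
    and "P4 \<equiv> (\<forall>S\<in>B. \<exists>M. V_submodule sm M \<and> M \<in> B \<and> S \<subseteq> M \<and> sscale sm \<pi> (setpow M 2) \<subseteq> M)"
  shows "(P1 \<longleftrightarrow> P2) \<and> (P2 \<longleftrightarrow> P3) \<and> (P3 \<longleftrightarrow> P4)"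
proof -
  interpret bornological_V_alg sm B
    by unfold_locales (fact assms(4))
  have "P3" if "P1"
    using that fsums_setpow_Suc_bounded_if_rho_le_1[where \<pi> = \<pi> and eps = eps] assms(2,3)
    unfolding P1_def P3_def by blast
  moreover have "P4" if "P3"
    using that absorbing_hull_if_fsums_setpow_Suc_bounded[of \<pi>] unfolding P3_def P4_def by blast
  moreover have "P2" if "P4"
    using that fsums_setpow_affine_bounded[of \<pi>] unfolding P2_def P4_def by blast
  moreover have "P1" if "P4"
    using that rho_le_1_if_absorbing_hulls[of \<pi> _ eps] assms(2,3) unfolding P1_def P4_def by blast
  moreover have "P3" if "P2"
    using that[unfolded P2_def, rule_format, of _ 1 1] unfolding P3_def by simp
  ultimately show ?thesis
    by blast
qed

end
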